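(* Let $F:\mathbb{R}^n\to\mathbb{R}^m$ be continuously differentiable around $\bar x$, let $g:\mathbb{R}^m\to\mathbb{R}\cup\{\infty\}$ be lower semicontinuous and convex with $\bar y:=F(\bar x)\in\operatorname{dom}g$, and let $\bar y^*\in\partial g(\bar y)$. Assume the second-order qualification condition (SOQC) holds at $\bar x$ for $\bar y^*$, i.e., for every $L\in\mathcal{S}(\partial g)(\bar y,\bar y^* )$, $\nabla F(\bar x)^Tv^*=0$ and $(0,v^* )\in L$ imply $v^*=0$. Then there is a neighborhood $\mathcal{V}\subset\mathbb{R}^n\times\mathbb{R}^m\times\mathbb{R}^m$ of $(\bar x,\bar y^*,0)$ such that for all $(\tilde x,\tilde y^*,b)\in\mathcal{V}$ with $\tilde y^*\in\partial g(F(\tilde x)+b)$ one has: for every $L\in\mathcal{S}(\partial g)(F(\tilde x)+b,\tilde y^* )$, $\nabla F(\tilde x)^Tv^*=0$ and $(0,v^* )\in L$ imply $v^*=0$; i.e., SOQC holds for $g\circ F_b$ at $\tilde x$ for $\tilde y^*$, where $F_b(x):=F(x)+b$.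
   Context: $\partial g$ is the convex subdifferential. Tangent cone: $T_\Omega(\bar z)=\operatorname{Limsup}_{t\downarrow0}(\Omega-\bar z)/t$. SC derivative: let $\mathcal{Z}_m$ be the set of $m$-dimensional linear subspaces of $\mathbb{R}^m\times\mathbb{R}^m$ with metric $d(L_1,L_2)=\|P_{L_1}-P_{L_2}\|$ ($P_L$ orthogonal projection onto $L$); let $\mathcal{O}$ be the set of $(y,y^* )\in\operatorname{gph}\partial g$ at which $T_{\operatorname{gph}\partial g}(y,y^* )$ is an $m$-dimensional subspace. Then $\mathcal{S}(\partial g)(y,y^* )$ is the set of $L\in\mathcal{Z}_m$ for which there exist $(y_k,y_k^* )\in\mathcal{O}$, $(y_k,y_k^* )\to(y,y^* )$, with $d(T_{\operatorname{gph}\partial g}(y_k,y_k^* ),L)\to0$. *)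

theory Defs
  imports "HOL-Analysis.Analysis"
begin

definition lsc_ext :: "('a::topological_space \<Rightarrow> ereal) \<Rightarrow> bool" where
  "lsc_ext g \<longleftrightarrow> (\<forall>y. g y \<le> Liminf (at y) g)"

definition convex_ext :: "('a::real_vector \<Rightarrow> ereal) \<Rightarrow> bool" where
  "convex_ext g \<longleftrightarrow> convex {(y, t::real). g y \<le> ereal t}"

definition edom :: "('a \<Rightarrow> ereal) \<Rightarrow> 'a set" where
  "edom g = {y. g y < \<infinity>}"

definition subdiff :: "('a::real_inner \<Rightarrow> ereal) \<Rightarrow> 'a \<Rightarrow> 'a set" where
  "subdiff g y = {v. y \<in> edom g \<and>
     (\<forall>z. ereal (real_of_ereal (g y) + v \<bullet> (z - y)) \<le> g z)}"

definition graph_subdiff :: "('a::real_inner \<Rightarrow> ereal) \<Rightarrow> ('a \<times> 'a) set" where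
  "graph_subdiff g = {(y, v). v \<in> subdiff g y}"

text \<open>Tangent (Bouligand) cone: outer limit of (Omega - z)/t as t decreases to 0.\<close>
definition tangent_cone :: "'a::real_normed_vector set \<Rightarrow> 'a \<Rightarrow> 'a set" where
  "tangent_cone \<Omega> z = {w. \<exists>t :: nat \<Rightarrow> real. \<exists>ws :: nat \<Rightarrow> 'a.
      (\<forall>k. t k > 0) \<and> t \<longlonglongrightarrow> 0 \<and> ws \<longlonglongrightarrow> w \<and> (\<forall>k. z + t k *\<^sub>R ws k \<in> \<Omega>)}"

definition proj :: "'a::euclidean_space set \<Rightarrow> 'a \<Rightarrow> 'a" where
  "proj L x = (THE p. p \<in> L \<and> (\<forall>l\<in>L. (x - p) \<bullet> l = 0))"

definition subspace_dist :: "'a::euclidean_space set \<Rightarrow> 'a set \<Rightarrow> real" where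
  "subspace_dist L1 L2 = onorm (\<lambda>x. proj L1 x - proj L2 x)"

definition Zm :: "((real^'m) \<times> (real^'m)) set set" where
  "Zm = {L. subspace L \<and> dim L = CARD('m)}"

definition Oset :: "(real^'m \<Rightarrow> ereal) \<Rightarrow> ((real^'m) \<times> (real^'m)) set" where
  "Oset g = {p. p \<in> graph_subdiff g \<and> tangent_cone (graph_subdiff g) p \<in> Zm}"

definition SC_deriv :: "(real^'m \<Rightarrow> ereal) \<Rightarrow> real^'m \<Rightarrow> real^'m \<Rightarrow> ((real^'m) \<times> (real^'m)) set set" where
  "SC_deriv g y v = {L \<in> Zm. \<exists>p :: nat \<Rightarrow> (real^'m) \<times> (real^'m).
      (\<forall>k. p k \<in> Oset g) \<and> p \<longlonglongrightarrow> (y, v) \<and>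
      (\<lambda>k. subspace_dist (tangent_cone (graph_subdiff g) (p k)) L) \<longlonglongrightarrow> 0}"

end

theory Submission
  imports Defs
begin

(* Identify a subspace L with its orthogonal projection P_L, so that the metric d on Z_m is the
   operator-norm distance of projections. The rank-m orthogonal projections are exactly the
   self-adjoint idempotents of trace m (the trace of a projection is its rank and depends
   continuously on the operator), a closed and bounded, hence compact, set of operators.
   In these terms L belongs to S(dg)(y, ystar) iff L is in Z_m and ((y, ystar), P_L) lies in the
   closure of the pairs (p, P_T) with p in O and T the tangent space of gph dg at p; so the SC
   derivative has closed graph. A failure of SOQC at (A, y, ystar) is witnessed by some L in
   S(dg)(y, ystar) and a unit vector v with A^T v = 0 and (0, v) in L. Along a sequence of failures
   a subsequence of (P_L, v) converges, and its limit witnesses a failure at the limit point. Hence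
   SOQC is an open condition on (A, y, ystar), and V is its preimage under the continuous map
   (x, ystar, b) |-> (F'(x), F(x) + b, ystar). *)

lemma proj_unique:
  fixes S :: "'a::euclidean_space set"
  assumes "subspace S" "p \<in> S" "\<forall>l\<in>S. (x - p) \<bullet> l = 0"
  shows "proj S x = p"
  unfolding proj_def
proof (rule the_equality)
  show "p \<in> S \<and> (\<forall>l\<in>S. (x - p) \<bullet> l = 0)"
    using assms by blast
next
  fix q assume q: "q \<in> S \<and> (\<forall>l\<in>S. (x - q) \<bullet> l = 0)"
  have "p - q \<in> S"
    using assms q by (simp add: subspace_diff)
  then have "(x - q) \<bullet> (p - q) - (x - p) \<bullet> (p - q) = 0"
    using assms q by simp
  then have "(p - q) \<bullet> (p - q) = 0"
    by (simp add: algebra_simps inner_diff_left)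
  then show "q = p"
    by simp
qed

lemma proj_in_orthogonal:
  fixes S :: "'a::euclidean_space set"
  assumes "subspace S"
  shows "proj S x \<in> S \<and> (\<forall>l\<in>S. (x - proj S x) \<bullet> l = 0)"
proof -
  obtain y z where y: "y \<in> span S" and z: "\<And>w. w \<in> span S \<Longrightarrow> orthogonal z w"
    and xyz: "x = y + z"
    using orthogonal_subspace_decomp_exists by metis
  have "y \<in> S"
    using y assms by (metis span_eq_iff)
  moreover have "\<forall>l\<in>S. (x - y) \<bullet> l = 0"
    using z xyz by (auto simp: orthogonal_def span_base)
  ultimately show ?thesis
    using proj_unique[OF assms] by simp
qed

lemma proj_in: "subspace S \<Longrightarrow> proj S x \<in> S"
  using proj_in_orthogonal by blast

lemma proj_orthogonal: "subspace S \<Longrightarrow> l \<in> S \<Longrightarrow> (x - proj S x) \<bullet> l = 0"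
  using proj_in_orthogonal by blast

lemma inner_proj_left: "subspace S \<Longrightarrow> l \<in> S \<Longrightarrow> proj S x \<bullet> l = x \<bullet> l"
  using proj_orthogonal[of S l x] by (simp add: inner_diff_left)

lemma proj_id: "subspace S \<Longrightarrow> x \<in> S \<Longrightarrow> proj S x = x"
  by (rule proj_unique) auto

lemma proj_idem: "subspace S \<Longrightarrow> proj S (proj S x) = proj S x"
  by (simp add: proj_id proj_in)

lemma proj_eq_self_iff: "subspace S \<Longrightarrow> proj S x = x \<longleftrightarrow> x \<in> S"
  by (metis proj_id proj_in)

lemma linear_proj:
  fixes S :: "'a::euclidean_space set"
  assumes S: "subspace S"
  shows "linear (proj S)"
proof
  fix x y
  show "proj S (x + y) = proj S x + proj S y"
    using S by (intro proj_unique) (auto simp: subspace_add proj_in inner_diff_left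
      inner_add_left inner_proj_left)
next
  fix c :: real and x
  show "proj S (c *\<^sub>R x) = c *\<^sub>R proj S x"
    using S by (intro proj_unique) (auto simp: subspace_scale proj_in inner_diff_left
      inner_proj_left)
qed

lemma bounded_linear_proj: "subspace (S::'a::euclidean_space set) \<Longrightarrow> bounded_linear (proj S)"
  using linear_proj linear_conv_bounded_linear by blast

lemma proj_self_adjoint:
  assumes S: "subspace S"
  shows "proj S x \<bullet> y = x \<bullet> proj S y"
proof -
  have "proj S x \<bullet> proj S y = x \<bullet> proj S y" "proj S y \<bullet> proj S x = y \<bullet> proj S x"
    using S by (simp_all add: inner_proj_left proj_in)
  then show ?thesis
    by (metis inner_commute)
qed

lemma norm_proj_le:
  assumes S: "subspace S"
  shows "norm (proj S x) \<le> norm x"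
proof -
  have "(x - proj S x) \<bullet> proj S x = 0"
    using S by (simp add: proj_orthogonal proj_in)
  then have "norm (proj S x + (x - proj S x)) ^ 2 = norm (proj S x) ^ 2 + norm (x - proj S x) ^ 2"
    by (intro norm_add_Pythagorean) (simp add: orthogonal_def inner_commute)
  then have "norm (proj S x) ^ 2 \<le> norm x ^ 2"
    by simp
  then show ?thesis
    by (rule power2_le_imp_le) simp
qed

definition op_trace :: "('a::euclidean_space \<Rightarrow> 'a) \<Rightarrow> real" where
  "op_trace A = (\<Sum>b\<in>Basis. A b \<bullet> b)"

lemma proj_eq_sum_orthonormal_basis:
  fixes S :: "'a::euclidean_space set"
  assumes S: "subspace S" and B: "finite B" "span B = S" "pairwise orthogonal B"
    and unit: "\<And>e. e \<in> B \<Longrightarrow> norm e = 1"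
  shows "proj S x = (\<Sum>e\<in>B. (x \<bullet> e) *\<^sub>R e)"
proof (rule proj_unique[OF S])
  show "(\<Sum>e\<in>B. (x \<bullet> e) *\<^sub>R e) \<in> S"
    using S B span_superset by (auto intro!: subspace_sum subspace_scale)
  have "(x - (\<Sum>e\<in>B. (x \<bullet> e) *\<^sub>R e)) \<bullet> e' = 0" if e': "e' \<in> B" for e'
  proof -
    have "(\<Sum>e\<in>B. (x \<bullet> e) *\<^sub>R e) \<bullet> e' = (\<Sum>e\<in>B. (x \<bullet> e) * (e \<bullet> e'))"
      by (simp add: inner_sum_left)
    also have "\<dots> = (x \<bullet> e') * (e' \<bullet> e') + (\<Sum>e\<in>B - {e'}. (x \<bullet> e) * (e \<bullet> e'))"
      using B e' by (simp add: sum.remove)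
    also have "\<dots> = (x \<bullet> e') * (e' \<bullet> e')"
      using B e' by (auto simp: pairwise_def orthogonal_def intro!: sum.neutral)
    also have "\<dots> = x \<bullet> e'"
      using unit[OF e'] by (simp add: norm_eq_1)
    finally show ?thesis
      by (simp add: inner_diff_left)
  qed
  then show "\<forall>l\<in>S. (x - (\<Sum>e\<in>B. (x \<bullet> e) *\<^sub>R e)) \<bullet> l = 0"
    using B orthogonal_to_span[of _ B "x - (\<Sum>e\<in>B. (x \<bullet> e) *\<^sub>R e)"]
    by (auto simp: orthogonal_def)
qed

lemma op_trace_proj:
  fixes S :: "'a::euclidean_space set"
  assumes S: "subspace S"
  shows "op_trace (proj S) = real (dim S)"
proof -
  obtain B where "B \<subseteq> S" "pairwise orthogonal B" "\<And>x. x \<in> B \<Longrightarrow> norm x = 1"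
    "independent B" "card B = dim S" "span B = S"
    using orthonormal_basis_subspace[OF S] by blast
  moreover from this have "finite B"
    using independent_imp_finite by blast
  ultimately have proj_S: "proj S = (\<lambda>x. \<Sum>e\<in>B. (x \<bullet> e) *\<^sub>R e)" and unit: "\<forall>e\<in>B. e \<bullet> e = 1"
    using proj_eq_sum_orthonormal_basis[OF S] by (auto simp: norm_eq_1)
  have "op_trace (proj S) = (\<Sum>b\<in>Basis. \<Sum>e\<in>B. (e \<bullet> b) * (e \<bullet> b))"
    unfolding op_trace_def proj_S by (simp add: inner_sum_left inner_sum_right inner_commute)
  also have "\<dots> = (\<Sum>e\<in>B. \<Sum>b\<in>Basis. (e \<bullet> b) * (e \<bullet> b))"
    by (rule sum.swap)
  also have "\<dots> = (\<Sum>e\<in>B. e \<bullet> e)"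
    by (simp add: euclidean_inner[symmetric])
  finally show ?thesis
    using unit \<open>card B = dim S\<close> by simp
qed

lemma proj_range_self_adjoint_idem:
  fixes Q :: "'a::euclidean_space \<Rightarrow> 'a"
  assumes Q: "linear Q" and idem: "\<And>x. Q (Q x) = Q x" and sa: "\<And>x y. Q x \<bullet> y = x \<bullet> Q y"
  shows "proj (range Q) x = Q x"
proof (rule proj_unique)
  show "subspace (range Q)"
    using Q by (rule linear_subspace_image[OF _ subspace_UNIV])
  have "(x - Q x) \<bullet> Q y = 0" for y
    using sa[of x "Q y"] by (simp add: idem inner_diff_left)
  then show "\<forall>l\<in>range Q. (x - Q x) \<bullet> l = 0"
    by blast
qed simp

definition proj_blinfun :: "'a::euclidean_space set \<Rightarrow> 'a \<Rightarrow>\<^sub>L 'a" where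
  "proj_blinfun S = Blinfun (proj S)"

lemma linear_blinfun_apply: "linear (blinfun_apply A)"
  by (rule bounded_linear.linear[OF blinfun.bounded_linear_right])

lemma blinfun_apply_proj_blinfun: "subspace S \<Longrightarrow> blinfun_apply (proj_blinfun S) = proj S"
  unfolding proj_blinfun_def by (intro bounded_linear_Blinfun_apply bounded_linear_proj)

lemma subspace_dist_eq_dist:
  assumes "subspace S" "subspace T"
  shows "subspace_dist S T = dist (proj_blinfun S) (proj_blinfun T)"
proof -
  have "blinfun_apply (proj_blinfun S - proj_blinfun T) = (\<lambda>x. proj S x - proj T x)"
    using assms by (simp add: fun_eq_iff blinfun.diff_left blinfun_apply_proj_blinfun)
  then show ?thesis
    by (simp add: subspace_dist_def dist_norm norm_blinfun.rep_eq)
qed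

lemma norm_proj_blinfun_le: "subspace S \<Longrightarrow> norm (proj_blinfun S) \<le> 1"
  by (rule norm_blinfun_bound) (simp_all add: blinfun_apply_proj_blinfun norm_proj_le)

lemma proj_blinfuns_dim_eq:
  "{proj_blinfun S | S :: 'a::euclidean_space set. subspace S \<and> dim S = d} =
   {A. A o\<^sub>L A = A \<and> (\<forall>x y. A x \<bullet> y = x \<bullet> A y) \<and> op_trace A = real d}"
proof (intro equalityI subsetI)
  fix A assume "A \<in> {proj_blinfun S | S :: 'a set. subspace S \<and> dim S = d}"
  then obtain S where S: "subspace S" "dim S = d" and A: "blinfun_apply A = proj S"
    using blinfun_apply_proj_blinfun by blast
  have "A o\<^sub>L A = A"
    by (rule blinfun_eqI) (simp add: A S proj_idem)
  then show "A \<in> {A. A o\<^sub>L A = A \<and> (\<forall>x y. A x \<bullet> y = x \<bullet> A y) \<and> op_trace A = real d}"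
    by (simp add: A S proj_self_adjoint op_trace_proj)
next
  fix A :: "'a \<Rightarrow>\<^sub>L 'a"
  assume "A \<in> {A. A o\<^sub>L A = A \<and> (\<forall>x y. A x \<bullet> y = x \<bullet> A y) \<and> op_trace A = real d}"
  then have comp: "A o\<^sub>L A = A" and sa: "\<And>x y. A x \<bullet> y = x \<bullet> A y"
    and trace: "op_trace A = real d"
    by auto
  have idem: "A (A x) = A x" for x
    by (metis comp blinfun_apply_blinfun_compose)
  have proj_range: "proj (range A) = A"
    using proj_range_self_adjoint_idem[OF linear_blinfun_apply idem sa] by auto
  have S: "subspace (range A)"
    using linear_blinfun_apply by (rule linear_subspace_image[OF _ subspace_UNIV])
  moreover have "dim (range A) = d"
    using op_trace_proj[OF S] trace by (simp add: proj_range)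
  moreover have "A = proj_blinfun (range A)"
    by (rule blinfun_eqI) (simp add: blinfun_apply_proj_blinfun S proj_range)
  ultimately show "A \<in> {proj_blinfun S | S. subspace S \<and> dim S = d}"
    by blast
qed

lemma compact_proj_blinfuns_dim:
  "compact {proj_blinfun S | S :: 'a::euclidean_space set. subspace S \<and> dim S = d}"
proof -
  have "bounded {proj_blinfun S | S :: 'a set. subspace S \<and> dim S = d}"
    unfolding bounded_iff using norm_proj_blinfun_le by blast
  moreover have "closed {A :: 'a \<Rightarrow>\<^sub>L 'a. A o\<^sub>L A = A \<and> (\<forall>x y. A x \<bullet> y = x \<bullet> A y) \<and> op_trace A = real d}"
    unfolding Collect_conj_eq Collect_all_eq op_trace_def
    by (intro closed_Int closed_INT ballI closed_Collect_eq continuous_intros)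
  ultimately show ?thesis
    by (simp add: compact_eq_bounded_closed proj_blinfuns_dim_eq)
qed

lemma mem_subspace_limit:
  assumes S: "\<And>k. subspace (S k)" "\<And>k. x k \<in> S k" and T: "subspace T"
    and x: "x \<longlonglongrightarrow> y" and P: "(\<lambda>k. proj_blinfun (S k)) \<longlonglongrightarrow> proj_blinfun T"
  shows "y \<in> T"
proof -
  have "(\<lambda>k. proj_blinfun (S k) (x k)) \<longlonglongrightarrow> proj_blinfun T y"
    using P x by (rule blinfun.tendsto)
  moreover have "proj_blinfun (S k) (x k) = x k" for k
    by (simp add: S blinfun_apply_proj_blinfun proj_id)
  ultimately have "x \<longlonglongrightarrow> proj T y"
    by (simp add: T blinfun_apply_proj_blinfun)
  then have "proj T y = y"
    using x by (rule LIMSEQ_unique)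
  then show ?thesis
    using T proj_eq_self_iff by blast
qed

definition tangent_proj_graph ::
    "(real^'m \<Rightarrow> ereal) \<Rightarrow>
      (((real^'m) \<times> (real^'m)) \<times> (((real^'m) \<times> (real^'m)) \<Rightarrow>\<^sub>L ((real^'m) \<times> (real^'m)))) set" where
  "tangent_proj_graph g = (\<lambda>p. (p, proj_blinfun (tangent_cone (graph_subdiff g) p))) ` Oset g"

lemma tendsto_Pair_iff:
  "((\<lambda>k. (f k, g k)) \<longlongrightarrow> (a, b)) F \<longleftrightarrow> (f \<longlongrightarrow> a) F \<and> (g \<longlongrightarrow> b) F"
proof
  assume lim: "((\<lambda>k. (f k, g k)) \<longlongrightarrow> (a, b)) F"
  show "(f \<longlongrightarrow> a) F \<and> (g \<longlongrightarrow> b) F"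
    using tendsto_fst[OF lim] tendsto_snd[OF lim] by simp
qed (simp add: tendsto_Pair)

lemma closure_image_sequential:
  fixes f :: "'a \<Rightarrow> 'b::first_countable_topology"
  shows "l \<in> closure (f ` S) \<longleftrightarrow> (\<exists>p. (\<forall>k. p k \<in> S) \<and> (\<lambda>k. f (p k)) \<longlonglongrightarrow> l)"
proof
  assume "l \<in> closure (f ` S)"
  then obtain z where z: "\<forall>k. z k \<in> f ` S" and "z \<longlonglongrightarrow> l"
    unfolding closure_sequential by blast
  moreover from z obtain p where "\<forall>k. p k \<in> S" "z = (\<lambda>k. f (p k))"
    unfolding image_iff by metis
  ultimately show "\<exists>p. (\<forall>k. p k \<in> S) \<and> (\<lambda>k. f (p k)) \<longlonglongrightarrow> l"
    by blast
next
  assume "\<exists>p. (\<forall>k. p k \<in> S) \<and> (\<lambda>k. f (p k)) \<longlonglongrightarrow> l"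
  then obtain p where "\<forall>k. p k \<in> S" "(\<lambda>k. f (p k)) \<longlonglongrightarrow> l"
    by blast
  then show "l \<in> closure (f ` S)"
    unfolding closure_sequential by (intro exI[of _ "\<lambda>k. f (p k)"]) auto
qed

lemma SC_deriv_eq_closure:
  "SC_deriv g y v = {L \<in> Zm. ((y, v), proj_blinfun L) \<in> closure (tangent_proj_graph g)}"
proof -
  let ?T = "tangent_cone (graph_subdiff g)"
  have dist_eq: "(\<lambda>k. subspace_dist (?T (p k)) L) =
      (\<lambda>k. dist (proj_blinfun (?T (p k))) (proj_blinfun L))"
    if "\<forall>k. p k \<in> Oset g" "L \<in> Zm" for p L
    using that by (simp add: subspace_dist_eq_dist Oset_def Zm_def)
  show ?thesis
    unfolding SC_deriv_def tangent_proj_graph_def closure_image_sequential tendsto_Pair_iff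
    by (auto simp: dist_eq tendsto_dist_iff[symmetric])
qed

lemma SC_deriv_closed_graph:
  assumes yv: "(\<lambda>k. (y k, v k)) \<longlonglongrightarrow> (y0, v0)"
    and L: "\<And>k. L k \<in> SC_deriv g (y k) (v k)" and L0: "L0 \<in> Zm"
    and P: "(\<lambda>k. proj_blinfun (L k)) \<longlonglongrightarrow> proj_blinfun L0"
  shows "L0 \<in> SC_deriv g y0 v0"
proof -
  have "((y k, v k), proj_blinfun (L k)) \<in> closure (tangent_proj_graph g)" for k
    using L[of k] by (simp add: SC_deriv_eq_closure)
  moreover have "(\<lambda>k. ((y k, v k), proj_blinfun (L k))) \<longlonglongrightarrow> ((y0, v0), proj_blinfun L0)"
    using yv P by (rule tendsto_Pair)
  ultimately have "((y0, v0), proj_blinfun L0) \<in> closure (tangent_proj_graph g)"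
    by (rule closed_sequentially[OF closed_closure])
  then show ?thesis
    using L0 by (simp add: SC_deriv_eq_closure)
qed

definition SOQC ::
    "(real^'m \<Rightarrow> ereal) \<Rightarrow> ('a::euclidean_space \<Rightarrow>\<^sub>L (real^'m)) \<Rightarrow> (real^'m) \<Rightarrow> (real^'m) \<Rightarrow> bool" where
  "SOQC g A y ys \<longleftrightarrow>
     (\<forall>L\<in>SC_deriv g y ys. \<forall>v. adjoint (blinfun_apply A) v = 0 \<and> (0, v) \<in> L \<longrightarrow> v = 0)"

lemma adjoint_eq_0_iff:
  fixes f :: "'a::euclidean_space \<Rightarrow> 'b::euclidean_space"
  assumes "linear f"
  shows "adjoint f v = 0 \<longleftrightarrow> (\<forall>w. f w \<bullet> v = 0)"
proof
  assume "\<forall>w. f w \<bullet> v = 0"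
  then have "adjoint f v \<bullet> adjoint f v = 0"
    using adjoint_works[OF assms] by metis
  then show "adjoint f v = 0"
    by simp
qed (metis adjoint_works[OF assms] inner_zero_right)

lemma not_SOQC_iff:
  "\<not> SOQC g A y ys \<longleftrightarrow>
     (\<exists>L\<in>SC_deriv g y ys. \<exists>v. (\<forall>w. A w \<bullet> v = 0) \<and> (0, v) \<in> L \<and> norm v = 1)"
proof
  assume "\<not> SOQC g A y ys"
  then obtain L u where L: "L \<in> SC_deriv g y ys" and Au: "\<forall>w. A w \<bullet> u = 0"
    and uL: "(0, u) \<in> L" and u: "u \<noteq> 0"
    by (auto simp: SOQC_def adjoint_eq_0_iff[OF linear_blinfun_apply])
  have "subspace L"
    using L by (simp add: SC_deriv_def Zm_def)
  then have "(0, u /\<^sub>R norm u) \<in> L"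
    using subspace_scale[OF _ uL, of "inverse (norm u)"] by simp
  moreover have "\<forall>w. A w \<bullet> (u /\<^sub>R norm u) = 0"
    using Au by simp
  ultimately show "\<exists>L\<in>SC_deriv g y ys. \<exists>v. (\<forall>w. A w \<bullet> v = 0) \<and> (0, v) \<in> L \<and> norm v = 1"
    using L u by (intro bexI[OF _ L] exI[of _ "u /\<^sub>R norm u"]) auto
next
  assume "\<exists>L\<in>SC_deriv g y ys. \<exists>v. (\<forall>w. A w \<bullet> v = 0) \<and> (0, v) \<in> L \<and> norm v = 1"
  then show "\<not> SOQC g A y ys"
    unfolding SOQC_def adjoint_eq_0_iff[OF linear_blinfun_apply] by (metis norm_zero zero_neq_one)
qed

lemma Zm_sphere_subseq_convergent:
  fixes L :: "nat \<Rightarrow> ((real^'m) \<times> (real^'m)) set" and v :: "nat \<Rightarrow> 'a::euclidean_space"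
  assumes "\<And>k. L k \<in> Zm" and "\<And>k. norm (v k) = 1"
  obtains r L0 w where "strict_mono r" "L0 \<in> Zm" "norm w = 1"
    "(\<lambda>k. proj_blinfun (L (r k))) \<longlonglongrightarrow> proj_blinfun L0" "(\<lambda>k. v (r k)) \<longlonglongrightarrow> w"
proof -
  define K :: "((((real^'m) \<times> (real^'m)) \<Rightarrow>\<^sub>L ((real^'m) \<times> (real^'m))) \<times> 'a) set"
    where "K = {proj_blinfun S | S. subspace S \<and> dim S = CARD('m)} \<times> sphere 0 1"
  have "seq_compact K"
    unfolding K_def by (intro compact_imp_seq_compact compact_Times compact_proj_blinfuns_dim compact_sphere)
  moreover have "\<forall>k. (proj_blinfun (L k), v k) \<in> K"
    using assms by (auto simp: K_def Zm_def)
  ultimately obtain l r where "l \<in> K" and r: "strict_mono r"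
    and lim: "((\<lambda>k. (proj_blinfun (L k), v k)) \<circ> r) \<longlonglongrightarrow> l"
    by (rule seq_compactE)
  moreover from \<open>l \<in> K\<close> obtain L0 w where l: "l = (proj_blinfun L0, w)" and "L0 \<in> Zm" "norm w = 1"
    by (auto simp: K_def Zm_def)
  ultimately show ?thesis
    using that unfolding l o_def tendsto_Pair_iff by blast
qed

lemma not_SOQC_limit:
  fixes A :: "nat \<Rightarrow> 'a::euclidean_space \<Rightarrow>\<^sub>L (real^'m)"
  assumes A: "A \<longlonglongrightarrow> A0" and y: "y \<longlonglongrightarrow> y0" and ys: "ys \<longlonglongrightarrow> ys0"
    and fails: "\<And>k. \<not> SOQC g (A k) (y k) (ys k)"
  shows "\<not> SOQC g A0 y0 ys0"
proof -
  have "\<forall>k. \<exists>L v. L \<in> SC_deriv g (y k) (ys k) \<and> (\<forall>w. A k w \<bullet> v = 0) \<and> (0, v) \<in> L \<and> norm v = 1"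
    using fails unfolding not_SOQC_iff by blast
  then obtain L v where L: "\<And>k. L k \<in> SC_deriv g (y k) (ys k)" and Av: "\<And>k w. A k w \<bullet> v k = 0"
    and vL: "\<And>k. (0, v k) \<in> L k" and "\<And>k. norm (v k) = 1"
    by metis
  moreover have "L k \<in> Zm" for k
    using L by (simp add: SC_deriv_def)
  ultimately obtain r L0 w where r: "strict_mono r" and L0: "L0 \<in> Zm" and "norm w = 1"
    and PL: "(\<lambda>k. proj_blinfun (L (r k))) \<longlonglongrightarrow> proj_blinfun L0" and vw: "(\<lambda>k. v (r k)) \<longlonglongrightarrow> w"
    using Zm_sphere_subseq_convergent by metis
  have "(\<lambda>k. (y (r k), ys (r k))) \<longlonglongrightarrow> (y0, ys0)"
    using LIMSEQ_subseq_LIMSEQ[OF y r] LIMSEQ_subseq_LIMSEQ[OF ys r]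
    by (simp add: o_def tendsto_Pair_iff)
  then have "L0 \<in> SC_deriv g y0 ys0"
    using L L0 PL by (rule SC_deriv_closed_graph)
  moreover have "(0, w) \<in> L0"
  proof (rule mem_subspace_limit)
    show "subspace (L (r k))" for k
      using L by (simp add: SC_deriv_def Zm_def)
    show "subspace L0"
      using L0 by (simp add: Zm_def)
    show "(\<lambda>k. (0, v (r k))) \<longlonglongrightarrow> (0, w)"
      using vw by (intro tendsto_Pair tendsto_const)
  qed (use vL PL in auto)
  moreover have "A0 z \<bullet> w = 0" for z
  proof -
    have "(\<lambda>k. A (r k) z \<bullet> v (r k)) \<longlonglongrightarrow> A0 z \<bullet> w"
      using LIMSEQ_subseq_LIMSEQ[OF A r] vw by (auto simp: o_def intro!: tendsto_intros)
    then show ?thesis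
      by (simp add: Av LIMSEQ_const_iff)
  qed
  ultimately show ?thesis
    using \<open>norm w = 1\<close> unfolding not_SOQC_iff by blast
qed

lemma open_SOQC: "open {(A, y, ys). SOQC g A y ys}"
proof -
  have "closed (- {(A, y, ys). SOQC g A y ys})"
    unfolding closed_sequential_limits
  proof (intro allI impI, elim conjE)
    fix z l
    assume z: "\<forall>k. z k \<in> - {(A, y, ys). SOQC g A y ys}" and lim: "z \<longlonglongrightarrow> l"
    have "\<not> SOQC g (fst l) (fst (snd l)) (snd (snd l))"
      using z by (intro not_SOQC_limit[OF tendsto_fst[OF lim] tendsto_fst[OF tendsto_snd[OF lim]]
            tendsto_snd[OF tendsto_snd[OF lim]]]) (simp add: case_prod_beta)
    then show "l \<in> - {(A, y, ys). SOQC g A y ys}"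
      by (simp add: case_prod_beta)
  qed
  then show ?thesis
    by (simp add: closed_open)
qed

theorem proposition3p5:
  fixes F :: "real^'n \<Rightarrow> real^'m"
    and F' :: "real^'n \<Rightarrow> ((real^'n) \<Rightarrow>\<^sub>L (real^'m))"
    and g :: "real^'m \<Rightarrow> ereal"
    and U :: "(real^'n) set"
    and xbar :: "real^'n" and ybarstar :: "real^'m"
  assumes U: "open U" "xbar \<in> U"
    and F_deriv: "\<forall>x\<in>U. (F has_derivative blinfun_apply (F' x)) (at x)"
    and F'_cont: "continuous_on U F'"
    and g_proper: "\<forall>y. g y \<noteq> -\<infinity>"
    and g_lsc: "lsc_ext g"
    and g_convex: "convex_ext g"
    and ybar_dom: "F xbar \<in> edom g"
    and ystar: "ybarstar \<in> subdiff g (F xbar)"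
    and SOQC: "\<forall>L\<in>SC_deriv g (F xbar) ybarstar. \<forall>v.
                 adjoint (blinfun_apply (F' xbar)) v = 0 \<and> (0, v) \<in> L \<longrightarrow> v = 0"
  shows "\<exists>V :: ((real^'n) \<times> (real^'m) \<times> (real^'m)) set. open V \<and> (xbar, ybarstar, 0) \<in> V \<and>
     (\<forall>x ystar b. (x, ystar, b) \<in> V \<and> ystar \<in> subdiff g (F x + b) \<longrightarrow>
        (\<forall>L\<in>SC_deriv g (F x + b) ystar. \<forall>v.
            adjoint (blinfun_apply (F' x)) v = 0 \<and> (0, v) \<in> L \<longrightarrow> v = 0))"
proof -
  define \<Phi> where "\<Phi> z = (F' (fst z), F (fst z) + snd (snd z), fst (snd z))"
    for z :: "(real^'n) \<times> (real^'m) \<times> (real^'m)"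
  define V where "V = (U \<times> UNIV) \<inter> \<Phi> -` {(A, y, ys). SOQC g A y ys}"
  have "continuous_on U F"
    using F_deriv has_derivative_continuous continuous_at_imp_continuous_on by blast
  then have "continuous_on (U \<times> UNIV) \<Phi>"
    unfolding \<Phi>_def using F'_cont
    by (auto intro!: continuous_intros continuous_on_compose2[of U] simp: subset_eq)
  then have "open V"
    unfolding V_def using U(1) open_SOQC by (intro continuous_open_preimage open_Times) auto
  moreover have "(xbar, ybarstar, 0) \<in> V"
    using U(2) SOQC by (simp add: V_def \<Phi>_def SOQC_def)
  ultimately show ?thesis
    by (intro exI[of _ V]) (auto simp: V_def \<Phi>_def SOQC_def)
qed

end
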